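(* Let $m\ge1$, let ${\bf d}^m=(d_1,\dots,d_m)$ be positive integers, and let $j\ge2$ be an integer, with the $d_i$ ordered so that $d_1,\dots,d_{k_j}$ are exactly those divisible by $j$ ($0\le k_j\le m$). Put $s_m=\sum_{i=1}^m d_i$, $\pi_m=\prod_{i=1}^m d_i$ and ${\bf d}^m_j=(d_1,\dots,d_{k_j},\,jd_{k_j+1},\dots,jd_m)$. Then for every $s$, $$\frac{j^{k_j-m}}{(m-1)!\,\pi_m}\sum_{r_{k_j+1}=0}^{j-1}\cdots\sum_{r_m=0}^{j-1} B^{(m)}_{m-1}\Big(s+s_m+\sum_{i=k_j+1}^m r_id_i,\ {\bf d}^m_j\Big)=\frac{1}{(m-1)!\,\pi_m}B^{(m)}_{m-1}\big(s+s_m,{\bf d}^m\big),$$ and the right-hand side equals the polynomial part $W_1(s,{\bf d}^m)$ of the restricted partition function.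
   Context: For an integer $q\ge1$ and nonzero numbers ${\bf e}=(e_1,\dots,e_q)$, the Bernoulli polynomials of higher order $B^{(q)}_n(x,{\bf e})$ are defined by $$\frac{e^{xt}\,t^q\prod_{i=1}^q e_i}{\prod_{i=1}^q (e^{e_it}-1)}=\sum_{n=0}^\infty B^{(q)}_n(x,{\bf e})\frac{t^n}{n!}.$$ $W_1(s,{\bf d}^m)$ denotes the first Sylvester wave, i.e. the coefficient of $t^{-1}$ in the Laurent expansion in $t$ of $e^{st}/\prod_{k=1}^m(1-e^{-d_kt})$; it is known to equal $\frac{1}{(m-1)!\,\pi_m}B^{(m)}_{m-1}(s+s_m,{\bf d}^m)$. *)

theory Defs
  imports "HOL-Computational_Algebra.Formal_Power_Series" "HOL-Computational_Algebra.Formal_Laurent_Series"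
begin

text \<open>Higher-order Bernoulli polynomial B^(q)_n(x, e) with parameters e 1, ..., e q,
  defined through its exponential generating function
  e^(xt) t^q prod e_i / prod (e^(e_i t) - 1)
  = e^(xt) / prod_i ((e^(e_i t) - 1) / (e_i t)),
  taken as a formal power series in t.\<close>
definition bernoulli_higher :: "nat \<Rightarrow> (nat \<Rightarrow> real) \<Rightarrow> nat \<Rightarrow> real \<Rightarrow> real" where
  "bernoulli_higher q e n x =
     fact n * fps_nth
       (fps_exp x * inverse (\<Prod>i\<in>{1..q}. fps_const (1 / e i) * fps_shift 1 (fps_exp (e i) - 1))) n"

definition sylvester_wave1 :: "real \<Rightarrow> (nat \<Rightarrow> nat) \<Rightarrow> nat \<Rightarrow> real" where
  "sylvester_wave1 s d m =
     fls_nth (fps_to_fls (fps_exp s) *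
              inverse (\<Prod>k\<in>{1..m}. fps_to_fls (1 - fps_exp (- real (d k))))) (-1)"

end

theory Submission
  imports Defs "HOL-Library.FuncSet"
begin

text \<open>Put \<open>Q(c) = (e^(ct) - 1)/(ct)\<close>, so that \<open>B^(q)_n(x, e)\<close> is \<open>n!\<close> times the
  \<open>n\<close>-th coefficient of \<open>e^(xt) / \<Prod>i Q(e_i)\<close>. By the geometric sum,
  \<open>(\<Sum>r<j. e^(rct)) Q(c) = j Q(jc)\<close>; summing the shifts \<open>x + \<Sum>i\<in>K. r_i e_i\<close> over
  \<open>r \<in> {0..j-1}^K\<close> therefore multiplies the generating function by \<open>\<Prod>i\<in>K. \<Sum>r<j. e^(r e_i t)\<close>,
  which replaces each \<open>Q(e_i)\<close>, \<open>i \<in> K\<close>, by \<open>j Q(j e_i)\<close>. For the Sylvester wave,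
  \<open>1 - e^(-ct) = t c e^(-ct) Q(c)\<close>, so the Laurent series has a pole of order \<open>m\<close> whose
  regular part is \<open>e^((s + s_m) t) / (\<pi>_m \<Prod>i Q(d_i))\<close>; its residue is the \<open>(m-1)\<close>-th
  coefficient of that series.\<close>

text \<open>The power series of \<open>(e^(ct) - 1)/(ct)\<close>; at \<open>c = 0\<close> it is \<open>0\<close>, not \<open>1\<close>.\<close>
definition fps_exp_quot :: "'a::field_char_0 \<Rightarrow> 'a fps" where
  "fps_exp_quot c = fps_const (1 / c) * fps_shift 1 (fps_exp c - 1)"

lemma fps_X_times_exp_quot: "fps_X * fps_exp_quot c = fps_const (1 / c) * (fps_exp c - 1)"
  unfolding fps_exp_quot_def by (intro fps_ext) simp

lemma fps_exp_quot_nth_0: "c \<noteq> 0 \<Longrightarrow> fps_exp_quot c $ 0 = 1"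
  unfolding fps_exp_quot_def by simp

lemma bernoulli_higher_conv_exp_quot:
  "bernoulli_higher q e n x = fact n * (fps_exp x * inverse (\<Prod>i\<in>{1..q}. fps_exp_quot (e i))) $ n"
  by (simp add: bernoulli_higher_def fps_exp_quot_def)

lemma fps_exp_sum: "fps_exp (\<Sum>i\<in>A. f i) = (\<Prod>i\<in>A. fps_exp (f i :: 'a::field_char_0))"
  by (induction A rule: infinite_finite_induct) (simp_all add: fps_exp_add_mult)

lemma fps_const_prod: "fps_const (\<Prod>i\<in>A. f i) = (\<Prod>i\<in>A. fps_const (f i :: 'a::comm_ring_1))"
  by (induction A rule: infinite_finite_induct) (simp_all flip: fps_const_mult)

lemma fps_prod_nth_0: "(\<Prod>i\<in>A. f i) $ 0 = (\<Prod>i\<in>A. f i $ 0 :: 'a::comm_ring_1)"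
  by (induction A rule: infinite_finite_induct) simp_all

lemma fps_to_fls_prod: "fps_to_fls (\<Prod>i\<in>A. f i) = (\<Prod>i\<in>A. fps_to_fls (f i :: 'a::comm_ring_1 fps))"
  by (induction A rule: infinite_finite_induct) (simp_all add: fls_times_fps_to_fls)

lemma sum_fps_exp_times_exp_quot:
  fixes c :: "'a::field_char_0"
  shows "(\<Sum>r<j. fps_exp (of_nat r * c)) * fps_exp_quot c
       = fps_const (of_nat j) * fps_exp_quot (of_nat j * c)"
proof -
  have "fps_X * ((\<Sum>r<j. fps_exp (of_nat r * c)) * fps_exp_quot c)
      = (\<Sum>r<j. fps_exp c ^ r) * (fps_X * fps_exp_quot c)"
    by (simp add: fps_exp_power_mult mult_ac)
  also have "\<dots> = fps_const (1 / c) * ((\<Sum>r<j. fps_exp c ^ r) * (fps_exp c - 1))"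
    by (simp add: fps_X_times_exp_quot mult_ac)
  also have "\<dots> = fps_const (1 / c) * (fps_exp (of_nat j * c) - 1)"
    using power_diff_sumr2[of "fps_exp c" j 1] by (simp add: fps_exp_power_mult mult.commute)
  also have "\<dots> = fps_const (of_nat j)
      * (fps_const (1 / (of_nat j * c)) * (fps_exp (of_nat j * c) - 1))"
    by (cases "j = 0") (simp_all add: mult.assoc[symmetric] flip: fps_const_mult)
  also have "\<dots> = fps_X * (fps_const (of_nat j) * fps_exp_quot (of_nat j * c))"
    by (metis fps_X_times_exp_quot mult.left_commute)
  finally show ?thesis by simp
qed

lemma prod_sum_fps_exp_times_exp_quot:
  fixes c :: "nat \<Rightarrow> 'a::field_char_0"
  shows "(\<Prod>i\<in>K. \<Sum>r<j. fps_exp (of_nat r * c i)) * (\<Prod>i\<in>K. fps_exp_quot (c i))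
       = fps_const (of_nat j ^ card K) * (\<Prod>i\<in>K. fps_exp_quot (of_nat j * c i))"
proof -
  have "(\<Prod>i\<in>K. \<Sum>r<j. fps_exp (of_nat r * c i)) * (\<Prod>i\<in>K. fps_exp_quot (c i))
      = (\<Prod>i\<in>K. fps_const (of_nat j) * fps_exp_quot (of_nat j * c i))"
    by (simp add: sum_fps_exp_times_exp_quot flip: prod.distrib)
  then show ?thesis
    by (simp add: prod.distrib)
qed

lemma sum_PiE_fps_exp:
  fixes g :: "'i \<Rightarrow> 'b \<Rightarrow> 'a::field_char_0"
  assumes "finite K" and "\<And>i. i \<in> K \<Longrightarrow> finite (A i)"
  shows "(\<Sum>r\<in>Pi\<^sub>E K A. fps_exp (\<Sum>i\<in>K. g i (r i)))
       = (\<Prod>i\<in>K. \<Sum>a\<in>A i. fps_exp (g i a))"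
  using assms by (simp add: fps_exp_sum prod_sum_PiE)

lemma fps_mult_inverse_eq_if_mult_eq:
  fixes a b c d :: "'a::field fps"
  assumes "a * b = c * d" and "b $ 0 \<noteq> 0" and "d $ 0 \<noteq> 0"
  shows "a * inverse d = c * inverse b"
proof -
  have "a * inverse d = a * b * inverse b * inverse d"
    using assms(2) by (simp add: inverse_mult_eq_1')
  also have "\<dots> = c * inverse b * (d * inverse d)"
    using assms(1) by (simp only: mult_ac)
  finally show ?thesis
    using assms(3) by (simp add: inverse_mult_eq_1')
qed

lemma sum_bernoulli_higher_dilated:
  fixes e e' :: "nat \<Rightarrow> real"
  assumes K: "K \<subseteq> {1..q}" and e_nonzero: "\<forall>i\<in>{1..q}. e i \<noteq> 0" and j: "j > 0"
    and e'_K: "\<forall>i\<in>K. e' i = real j * e i" and e'_rest: "\<forall>i\<in>{1..q} - K. e' i = e i"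
  shows "(\<Sum>r\<in>Pi\<^sub>E K (\<lambda>_. {..<j}). bernoulli_higher q e' n (x + (\<Sum>i\<in>K. real (r i) * e i)))
       = real j ^ card K * bernoulli_higher q e n x"
proof -
  define P where "P w = (\<Prod>i\<in>{1..q}. fps_exp_quot (w i))" for w :: "nat \<Rightarrow> real"
  define S where "S = (\<Prod>i\<in>K. \<Sum>r<j. fps_exp (real r * e i))"
  have "finite K"
    using K finite_subset by blast
  have P_split: "P e = (\<Prod>i\<in>{1..q} - K. fps_exp_quot (e i)) * (\<Prod>i\<in>K. fps_exp_quot (e i))"
    unfolding P_def using K by (simp add: prod.subset_diff)
  have "P e' = (\<Prod>i\<in>{1..q} - K. fps_exp_quot (e' i)) * (\<Prod>i\<in>K. fps_exp_quot (e' i))"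
    unfolding P_def using K by (simp add: prod.subset_diff)
  also have "\<dots> = (\<Prod>i\<in>{1..q} - K. fps_exp_quot (e i)) * (\<Prod>i\<in>K. fps_exp_quot (real j * e i))"
    using e'_K e'_rest by simp
  finally have SP: "S * P e = fps_const (real j ^ card K) * P e'"
    unfolding P_split S_def using prod_sum_fps_exp_times_exp_quot[of e j K]
    by (simp add: mult_ac)
  have "\<forall>i\<in>{1..q}. e' i \<noteq> 0"
    using e_nonzero e'_K e'_rest j by (metis DiffI mult_eq_0_iff of_nat_eq_0_iff not_gr_zero)
  with e_nonzero have "P e $ 0 \<noteq> 0" "P e' $ 0 \<noteq> 0"
    by (simp_all add: P_def fps_prod_nth_0 fps_exp_quot_nth_0)
  then have S_div: "S * inverse (P e') = fps_const (real j ^ card K) * inverse (P e)"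
    using SP by (intro fps_mult_inverse_eq_if_mult_eq) simp_all
  have sum_exp: "(\<Sum>r\<in>Pi\<^sub>E K (\<lambda>_. {..<j}). fps_exp (x + (\<Sum>i\<in>K. real (r i) * e i)))
      = fps_exp x * S"
    using sum_PiE_fps_exp[OF \<open>finite K\<close>, where A = "\<lambda>_. {..<j}" and g = "\<lambda>i r. real r * e i"]
    by (simp add: S_def fps_exp_add_mult flip: sum_distrib_left)
  have "(\<Sum>r\<in>Pi\<^sub>E K (\<lambda>_. {..<j}). bernoulli_higher q e' n (x + (\<Sum>i\<in>K. real (r i) * e i)))
      = fact n * ((\<Sum>r\<in>Pi\<^sub>E K (\<lambda>_. {..<j}). fps_exp (x + (\<Sum>i\<in>K. real (r i) * e i)))
                   * inverse (P e')) $ n"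
    by (simp add: bernoulli_higher_conv_exp_quot P_def fps_sum_nth sum_distrib_left sum_distrib_right)
  also have "\<dots> = fact n * (fps_exp x * (S * inverse (P e'))) $ n"
    by (simp only: sum_exp mult.assoc)
  also have "\<dots> = real j ^ card K * bernoulli_higher q e n x"
    unfolding S_div
    by (simp add: bernoulli_higher_conv_exp_quot P_def mult.left_commute[of "fps_exp x"])
  finally show ?thesis .
qed

lemma one_minus_fps_exp_neg:
  fixes c :: "'a::field_char_0"
  shows "1 - fps_exp (- c) = fps_X * (fps_const c * fps_exp (- c) * fps_exp_quot c)"
proof (cases "c = 0")
  case False
  have "fps_X * (fps_const c * fps_exp (- c) * fps_exp_quot c)
      = fps_exp (- c) * (fps_const c * (fps_X * fps_exp_quot c))"
    by (simp only: mult_ac)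
  also have "\<dots> = fps_exp (- c) * (fps_exp c - 1)"
    using False by (simp add: fps_X_times_exp_quot mult.assoc[symmetric] flip: fps_const_mult)
  also have "\<dots> = 1 - fps_exp (- c)"
    by (simp add: algebra_simps flip: fps_exp_add_mult)
  finally show ?thesis ..
qed simp

lemma fls_nth_minus_one_times_inverse_X_power:
  fixes f g :: "'a::field fps"
  assumes "g $ 0 \<noteq> 0" and "m \<ge> 1"
  shows "fls_nth (fps_to_fls f * inverse (fls_X ^ m * fps_to_fls g)) (-1)
       = (f * inverse g) $ (m - 1)"
proof -
  have "inverse (fps_to_fls g) = fps_to_fls (inverse g)"
    using assms(1) by (intro fls_inverse_fps_to_fls) simp
  then have "fps_to_fls f * inverse (fls_X ^ m * fps_to_fls g)
      = fls_shift (int m) (fps_to_fls (f * inverse g))"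
    by (simp add: fls_inverse_X_power fls_X_inv_power_times_conv_shift fls_times_fps_to_fls
        fls_shifted_times_simps)
  then show ?thesis
    using assms(2) by (cases m) simp_all
qed

lemma sylvester_wave1_conv_bernoulli_higher:
  assumes "m \<ge> 1" and d: "\<forall>i\<in>{1..m}. d i > 0"
  shows "sylvester_wave1 s d m = 1 / (fact (m - 1) * real (\<Prod>i\<in>{1..m}. d i))
           * bernoulli_higher m (\<lambda>i. real (d i)) (m - 1) (s + real (\<Sum>i\<in>{1..m}. d i))"
proof -
  define sm where "sm = real (\<Sum>i\<in>{1..m}. d i)"
  define pim where "pim = real (\<Prod>i\<in>{1..m}. d i)"
  define P where "P = (\<Prod>i\<in>{1..m}. fps_exp_quot (real (d i)))"
  define C where "C = fps_const pim * fps_exp (- sm) * P"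
  have "(\<Prod>i\<in>{1..m}. 1 - fps_exp (- real (d i))) = fps_X ^ m * C"
    by (simp add: one_minus_fps_exp_neg prod.distrib C_def P_def sm_def pim_def fps_exp_sum
        fps_const_prod flip: sum_negf)
  then have "(\<Prod>i\<in>{1..m}. fps_to_fls (1 - fps_exp (- real (d i)))) = fls_X ^ m * fps_to_fls C"
    by (simp only: fps_to_fls_prod[symmetric]) (simp add: fls_times_fps_to_fls fps_to_fls_power)
  moreover have "C $ 0 \<noteq> 0"
    using d by (simp add: C_def P_def pim_def fps_prod_nth_0 fps_exp_quot_nth_0)
  ultimately have "sylvester_wave1 s d m = (fps_exp s * inverse C) $ (m - 1)"
    unfolding sylvester_wave1_def using assms(1) by (metis fls_nth_minus_one_times_inverse_X_power)
  also have "fps_exp s * inverse C = fps_const (1 / pim) * (fps_exp (s + sm) * inverse P)"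
    by (simp add: C_def fps_inverse_mult fps_exp_neg fps_const_inverse fps_exp_add_mult
        divide_inverse mult_ac)
  finally show ?thesis
    by (simp add: bernoulli_higher_conv_exp_quot P_def sm_def pim_def)
qed

theorem mainTheorem3:
  fixes m j k :: nat and d :: "nat \<Rightarrow> nat" and s :: real
  assumes "m \<ge> 1" and "\<forall>i\<in>{1..m}. d i > 0" and "j \<ge> 2" and "k \<le> m"
    and "\<forall>i\<in>{1..k}. j dvd d i" and "\<forall>i\<in>{k+1..m}. \<not> j dvd d i"
  shows "(let sm = real (\<Sum>i\<in>{1..m}. d i); pim = real (\<Prod>i\<in>{1..m}. d i);
              dj = (\<lambda>i. if i \<le> k then real (d i) else real j * real (d i))
          in 1 / (real j ^ (m - k) * fact (m - 1) * pim) *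
               (\<Sum>r\<in>Pi\<^sub>E {k+1..m} (\<lambda>_. {..<j}).
                  bernoulli_higher m dj (m - 1) (s + sm + (\<Sum>i\<in>{k+1..m}. real (r i) * real (d i))))
             = 1 / (fact (m - 1) * pim) * bernoulli_higher m (\<lambda>i. real (d i)) (m - 1) (s + sm)
           \<and> 1 / (fact (m - 1) * pim) * bernoulli_higher m (\<lambda>i. real (d i)) (m - 1) (s + sm)
             = sylvester_wave1 s d m)"
proof -
  \<comment> \<open>The divisibility hypotheses only fix the order of the \<open>d_i\<close>; the identity holds for every \<open>k\<close>.\<close>
  define dj where "dj i = (if i \<le> k then real (d i) else real j * real (d i))" for i
  have "\<forall>i\<in>{1..m}. real (d i) \<noteq> 0" "\<forall>i\<in>{k+1..m}. dj i = real j * real (d i)"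
      "\<forall>i\<in>{1..m} - {k+1..m}. dj i = real (d i)"
    using assms(2) by (auto simp: dj_def)
  then have "(\<Sum>r\<in>Pi\<^sub>E {k+1..m} (\<lambda>_. {..<j}).
               bernoulli_higher m dj (m - 1) (x + (\<Sum>i\<in>{k+1..m}. real (r i) * real (d i))))
      = real j ^ (m - k) * bernoulli_higher m (\<lambda>i. real (d i)) (m - 1) x" for x
    using sum_bernoulli_higher_dilated[of "{k+1..m}" m "\<lambda>i. real (d i)" j dj] assms(3) by simp
  then show ?thesis
    using sylvester_wave1_conv_bernoulli_higher[OF assms(1,2)] assms(3)
    by (simp add: Let_def dj_def[abs_def])
qed

end
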